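(* Work in the semifield $\mathbb{R}_{\max,+}$. Let $\bm{r}_1,\ldots,\bm{r}_m\in\mathbb{R}^{n}$ and $w_1,\ldots,w_m\in\mathbb{R}$, and define $\bm{p}=w_1\bm{r}_1\oplus\cdots\oplus w_m\bm{r}_m$ and the row vector $\bm{q}^{-}=w_1\bm{r}_1^{-}\oplus\cdots\oplus w_m\bm{r}_m^{-}$. Then the minimum of $\bm{x}^{-}\bm{p}\oplus\bm{q}^{-}\bm{x}$ over $\bm{x}\in\mathbb{R}^{n}$ equals $$\Delta=(\bm{q}^{-}\bm{p})^{1/2},$$ and it is attained at every vector $\bm{x}$ satisfying $\Delta^{-1}\bm{p}\le\bm{x}\le\Delta\bm{q}$.
   Context: $\mathbb{R}_{\max,+}=(\mathbb{R}\cup\{-\infty\},-\infty,0,\max,+)$: addition $x\oplus y=\max(x,y)$, multiplication $x\otimes y=x+y$ (the sign $\otimes$ is omitted), zero $-\infty$, identity $0$, inverse $x^{-1}=-x$, and power $x^{y}=xy$ in ordinary arithmetic (so $\Delta=(\bm{q}^{-}\bm{p})^{1/2}$ means half of the ordinary number $\bm{q}^{-}\bm{p}$). Vectors in $\mathbb{R}^n$ are columns; vector operations are entrywise with these operations, e.g. $(w\bm{r})_j=w+r_j$, and a row vector times a column vector is $\bm{u}\bm{v}=\max_j(u_j+v_j)$. For a column vector $\bm{x}=(x_j)\in\mathbb{R}^n$, $\bm{x}^{-}$ is the row vector $(-x_1,\ldots,-x_n)$; for a row vector the pseudo-inverse is the column vector obtained the same way, so $\bm{q}$ denotes the column vector whose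 entries are the negatives of those of $\bm{q}^{-}$. Inequalities between vectors are componentwise. *)

theory Defs
  imports "HOL-Analysis.Analysis"
begin

text \<open>Max-plus algebra on real vectors indexed by a finite type 'n.
  Row vectors are also represented as elements of real^'n.\<close>

text \<open>Pseudo-inverse: entrywise negation (x^- for a column, or back for a row).\<close>
definition mp_pinv :: "real^'n \<Rightarrow> real^'n" where
  "mp_pinv x = (\<chi> j. - (x $ j))"

definition mp_inner :: "real^'n::finite \<Rightarrow> real^'n \<Rightarrow> real" where
  "mp_inner u v = Max (range (\<lambda>j. u $ j + v $ j))"

definition mp_scal :: "real \<Rightarrow> real^'n \<Rightarrow> real^'n" where
  "mp_scal c v = (\<chi> j. c + v $ j)"

definition mp_comb :: "nat \<Rightarrow> (nat \<Rightarrow> real) \<Rightarrow> (nat \<Rightarrow> real^'n) \<Rightarrow> real^'n" where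
  "mp_comb m w v = (\<chi> j. Max ((\<lambda>i. w i + v i $ j) ` {1..m}))"

end

theory Submission
  imports Defs
begin

text \<open>If the product \<open>q\<^sup>- p\<close> is attained at the index \<open>j\<close>, then for every \<open>x\<close> the two terms
  \<open>p\<^sub>j - x\<^sub>j \<le> x\<^sup>- p\<close> and \<open>q\<^sub>j + x\<^sub>j \<le> q\<^sup>- x\<close> add up to \<open>q\<^sup>- p\<close>, so their maximum is at least
  \<open>\<Delta> = q\<^sup>- p / 2\<close>. Conversely, \<open>x \<ge> \<Delta>\<^sup>-\<^sup>1 p\<close> bounds every term of \<open>x\<^sup>- p\<close> by \<open>\<Delta>\<close> and
  \<open>x \<le> \<Delta> q\<close> does the same for \<open>q\<^sup>- x\<close>. The box is nonempty since \<open>q\<^sub>j + p\<^sub>j \<le> 2\<Delta>\<close> for all \<open>j\<close>,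
  so the minimum \<open>\<Delta>\<close> is attained, e.g. at \<open>x = \<Delta>\<^sup>-\<^sup>1 p\<close>.\<close>

lemma mp_inner_ge: "u $ j + v $ j \<le> mp_inner u v"
  unfolding mp_inner_def by (rule Max_ge) auto

lemma mp_inner_leI: "(\<And>j. u $ j + v $ j \<le> c) \<Longrightarrow> mp_inner u v \<le> c"
  unfolding mp_inner_def by (subst Max_le_iff) auto

lemma mp_inner_attained:
  obtains j where "mp_inner u v = u $ j + v $ j"
proof -
  have "mp_inner u v \<in> range (\<lambda>j. u $ j + v $ j)"
    unfolding mp_inner_def by (rule Max_in) auto
  then show ?thesis using that by blast
qed

lemma mp_objective_ge_half:
  fixes p q x :: "real^'n::finite"
  shows "mp_inner q p / 2 \<le> max (mp_inner (mp_pinv x) p) (mp_inner q x)"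
proof -
  obtain j where j: "mp_inner q p = q $ j + p $ j"
    using mp_inner_attained .
  have "- x $ j + p $ j \<le> mp_inner (mp_pinv x) p"
    using mp_inner_ge[of "mp_pinv x" j p] by (simp add: mp_pinv_def)
  moreover have "q $ j + x $ j \<le> mp_inner q x"
    by (rule mp_inner_ge)
  ultimately show ?thesis using j by linarith
qed

lemma mp_objective_le_in_box:
  fixes p q x :: "real^'n::finite"
  assumes "\<forall>j. mp_scal (- D) p $ j \<le> x $ j \<and> x $ j \<le> mp_scal D (mp_pinv q) $ j"
  shows "max (mp_inner (mp_pinv x) p) (mp_inner q x) \<le> D"
proof -
  have "mp_inner (mp_pinv x) p \<le> D"
  proof (rule mp_inner_leI)
    fix j
    show "mp_pinv x $ j + p $ j \<le> D"
      using assms[rule_format, of j] by (simp add: mp_scal_def mp_pinv_def)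
  qed
  moreover have "mp_inner q x \<le> D"
  proof (rule mp_inner_leI)
    fix j
    show "q $ j + x $ j \<le> D"
      using assms[rule_format, of j] by (simp add: mp_scal_def mp_pinv_def)
  qed
  ultimately show ?thesis by simp
qed

lemma mp_lower_corner_in_box:
  fixes p q :: "real^'n::finite"
  assumes "D = mp_inner q p / 2"
  shows "\<forall>j. mp_scal (- D) p $ j \<le> mp_scal (- D) p $ j
    \<and> mp_scal (- D) p $ j \<le> mp_scal D (mp_pinv q) $ j"
proof
  fix j
  show "mp_scal (- D) p $ j \<le> mp_scal (- D) p $ j
    \<and> mp_scal (- D) p $ j \<le> mp_scal D (mp_pinv q) $ j"
    using mp_inner_ge[of q j p] assms by (simp add: mp_scal_def mp_pinv_def)
qed

theorem theorem5:
  fixes m :: nat and w :: "nat \<Rightarrow> real" and r :: "nat \<Rightarrow> real^'n::finite"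
    and p qm :: "real^'n" and \<Delta> :: real
  assumes "m \<ge> 1"
    and p_def: "p = mp_comb m w r"
    and qm_def: "qm = mp_comb m w (\<lambda>i. mp_pinv (r i))"
    and Delta_def: "\<Delta> = mp_inner qm p / 2"
  shows "\<Delta> \<in> range (\<lambda>x. max (mp_inner (mp_pinv x) p) (mp_inner qm x))
     \<and> (\<forall>x. max (mp_inner (mp_pinv x) p) (mp_inner qm x) \<ge> \<Delta>)
     \<and> (\<forall>x::real^'n. (\<forall>j. mp_scal (- \<Delta>) p $ j \<le> x $ j \<and> x $ j \<le> mp_scal \<Delta> (mp_pinv qm) $ j)
          \<longrightarrow> max (mp_inner (mp_pinv x) p) (mp_inner qm x) = \<Delta>)"
proof -
  have lower: "\<forall>x. max (mp_inner (mp_pinv x) p) (mp_inner qm x) \<ge> \<Delta>"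
    using mp_objective_ge_half Delta_def by blast
  have box: "\<forall>x::real^'n. (\<forall>j. mp_scal (- \<Delta>) p $ j \<le> x $ j \<and> x $ j \<le> mp_scal \<Delta> (mp_pinv qm) $ j)
      \<longrightarrow> max (mp_inner (mp_pinv x) p) (mp_inner qm x) = \<Delta>"
    using mp_objective_le_in_box lower by (meson antisym)
  have "max (mp_inner (mp_pinv (mp_scal (- \<Delta>) p)) p) (mp_inner qm (mp_scal (- \<Delta>) p)) = \<Delta>"
    using box mp_lower_corner_in_box[OF Delta_def] by blast
  then have "\<Delta> \<in> range (\<lambda>x. max (mp_inner (mp_pinv x) p) (mp_inner qm x))"
    by (rule range_eqI[OF sym])
  with lower box show ?thesis by blast
qed

end
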